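(* Fix $\rho>0$ and $W>0$, and for $N\in\mathbb{N}$ put $L=N/(\rho W)$ (so $\rho=N/(LW)$ and $\tau=iW/L=i\rho W^2/N$). Let $K^{R_N}$ be the correlation kernels below. Then for all $z=x+iy$, $z'=x'+iy'\in\mathbb{C}$, as $N\to\infty$: (i) $K^{A_{N-1}}(z,z')\to\mathcal{K}^A_{W,\rho}(z,z')=\sqrt2\rho e^{-\pi\rho(y^2+y'^2)}\int_0^{\sqrt\rho W}d\lambda\,e^{-2\pi\lambda^2+2\pi i\sqrt\rho(z-\bar z')\lambda}\vartheta_2(\sqrt\rho W(i\lambda+\sqrt\rho z);i\rho W^2)\vartheta_2(\sqrt\rho W(i\lambda-\sqrt\rho\bar z');i\rho W^2)$; (ii) for $R_N=B_N,B_N^\vee$, $K^{R_N}(z,z')\to\mathcal{K}^B_{W,\rho}(z,z')=-\rho e^{-2\pi\rho(y^2+y'^2)}[I_1^{(1)}-I_2^{(1)}]$; (iii) for $R_N=C_N,C_N^\vee,BC_N$, $K^{R_N}(z,z')\to\mathcal{K}^C_{W,\rho}(z,z')=\rho e^{-2\pi\rho(y^2+y'^2)}[I_1^{(2)}-I_2^{(2)}]$; (iv) $K^{D_N}(z,z')\to\mathcal{K}^D_{W,\rho}(z,z')=\rho e^{-2\pi\rho(y^2+y'^2)}[I_1^{(2)}+I_2^{(2)}]$; where for $\mu\in\{1,2\}$, $I_1^{(\mu)}=\int_{-\sqrt\rho W}^{\sqrt\rho W}d\lambda\,e^{-\pi\lambda^2+2\pi i\sqrt\rho(z-\bar z')\lambda}\vartheta_\mu(\sqrt\rho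 W(i\lambda+2\sqrt\rho z);2i\rho W^2)\vartheta_\mu(\sqrt\rho W(i\lambda-2\sqrt\rho\bar z');2i\rho W^2)$, $I_2^{(\mu)}=\int_{-\sqrt\rho W}^{\sqrt\rho W}d\lambda\,e^{-\pi\lambda^2+2\pi i\sqrt\rho(z+\bar z')\lambda}\vartheta_\mu(\sqrt\rho W(i\lambda+2\sqrt\rho z);2i\rho W^2)\vartheta_\mu(\sqrt\rho W(i\lambda+2\sqrt\rho\bar z');2i\rho W^2)$.
   Context: Jacobi theta functions ($\Im\tau>0$, $q_0=e^{\pi i\tau}$): $\vartheta_1(v;\tau)=i\sum_{n\in\mathbb{Z}}(-1)^nq_0^{(n-1/2)^2}e^{(2n-1)\pi iv}$, $\vartheta_2(v;\tau)=\sum_nq_0^{(n-1/2)^2}e^{(2n-1)\pi iv}$. For type $R_N\in\{A_{N-1},B_N,B_N^\vee,C_N,C_N^\vee,BC_N,D_N\}$: $\mathcal{N}$ is $N$ ($A_{N-1}$), $2N-1$ ($B_N$), $2N$ ($B_N^\vee,C_N^\vee$), $2(N+1)$ ($C_N$), $2N+1$ ($BC_N$), $2(N-1)$ ($D_N$); $J(j)$ is $j-1/2$ ($A_{N-1},C_N^\vee$), $j-1$ ($B_N,B_N^\vee,D_N$), $j$ ($C_N,BC_N$). $M_j^{R_N}(z)$: for $A_{N-1}$, $e^{2\pi iJ(j)z/L}\vartheta_2(J(j)\tau+\mathcal{N}z/L;\mathcal{N}\tau)$; for $B_N,B_N^\vee$, $e^{2\pi iJ(j)z/L}\vartheta_1(J(j)\tau+\mathcal{N}z/L;\mathcal{N}\tau)-e^{-2\pi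 iJ(j)z/L}\vartheta_1(J(j)\tau-\mathcal{N}z/L;\mathcal{N}\tau)$; for $C_N,C_N^\vee,BC_N$ the same with $\vartheta_2$; for $D_N$, $e^{2\pi iJ(j)z/L}\vartheta_2(J(j)\tau+\mathcal{N}z/L;\mathcal{N}\tau)+e^{-2\pi iJ(j)z/L}\vartheta_2(J(j)\tau-\mathcal{N}z/L;\mathcal{N}\tau)$. With $e_j=e^{-2\tau\pi iJ(j)^2/\mathcal{N}}$, $c=LW/\sqrt{2\mathcal{N}\Im\tau}$: $h_j^{A_{N-1}}=ce_j$; $h_j=2ce_j$ for $C_N,C_N^\vee,BC_N$; for $B_N,B_N^\vee$: $h_1=4ce_1$, $h_j=2ce_j$ ($j\ge2$); for $D_N$: $h_j=4ce_j$ ($j\in\{1,N\}$), $2ce_j$ otherwise. The kernel is $K^{R_N}(z,z')=e^{-\pi\mathcal{N}(y^2+y'^2)/(LW)}\sum_{n=1}^N M^{R_N}_n(z)\overline{M^{R_N}_n(z')}/h^{R_N}_n$. *)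

theory Defs
  imports "HOL-Analysis.Analysis"
begin

section \<open>Jacobi theta functions (q0 = exp(pi i tau), q0^a read as exp(pi i tau a))\<close>

definition theta1 :: "complex \<Rightarrow> complex \<Rightarrow> complex" where
  "theta1 v \<tau> = \<i> * (\<Sum>\<^sub>\<infinity>n::int. (-1) powi n * exp (pi * \<i> * \<tau> * (of_int n - 1/2)^2)
                         * exp ((2 * of_int n - 1) * pi * \<i> * v))"

definition theta2 :: "complex \<Rightarrow> complex \<Rightarrow> complex" where
  "theta2 v \<tau> = (\<Sum>\<^sub>\<infinity>n::int. exp (pi * \<i> * \<tau> * (of_int n - 1/2)^2)
                         * exp ((2 * of_int n - 1) * pi * \<i> * v))"

datatype rtype = A | B | Bv | C | Cv | BC | D
  (* A = A_{N-1}, B = B_N, Bv = B_N^vee, C = C_N, Cv = C_N^vee, BC = BC_N, D = D_N *)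

fun calN :: "rtype \<Rightarrow> nat \<Rightarrow> real" where
  "calN A N = real N"
| "calN B N = 2 * real N - 1"
| "calN Bv N = 2 * real N"
| "calN Cv N = 2 * real N"
| "calN C N = 2 * (real N + 1)"
| "calN BC N = 2 * real N + 1"
| "calN D N = 2 * (real N - 1)"

fun Jidx :: "rtype \<Rightarrow> nat \<Rightarrow> real" where
  "Jidx A j = real j - 1/2"
| "Jidx Cv j = real j - 1/2"
| "Jidx B j = real j - 1"
| "Jidx Bv j = real j - 1"
| "Jidx D j = real j - 1"
| "Jidx C j = real j"
| "Jidx BC j = real j"

definition Mfun :: "rtype \<Rightarrow> nat \<Rightarrow> real \<Rightarrow> complex \<Rightarrow> nat \<Rightarrow> complex \<Rightarrow> complex" where
  "Mfun t N L \<tau> j z =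
    (let J = complex_of_real (Jidx t j); NN = complex_of_real (calN t N);
         Lc = complex_of_real L;
         ep = exp (2 * pi * \<i> * J * z / Lc); em = exp (- 2 * pi * \<i> * J * z / Lc)
     in (case t of
          A \<Rightarrow> ep * theta2 (J * \<tau> + NN * z / Lc) (NN * \<tau>)
        | B \<Rightarrow> ep * theta1 (J * \<tau> + NN * z / Lc) (NN * \<tau>) - em * theta1 (J * \<tau> - NN * z / Lc) (NN * \<tau>)
        | Bv \<Rightarrow> ep * theta1 (J * \<tau> + NN * z / Lc) (NN * \<tau>) - em * theta1 (J * \<tau> - NN * z / Lc) (NN * \<tau>)
        | C \<Rightarrow> ep * theta2 (J * \<tau> + NN * z / Lc) (NN * \<tau>) - em * theta2 (J * \<tau> - NN * z / Lc) (NN * \<tau>)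
        | Cv \<Rightarrow> ep * theta2 (J * \<tau> + NN * z / Lc) (NN * \<tau>) - em * theta2 (J * \<tau> - NN * z / Lc) (NN * \<tau>)
        | BC \<Rightarrow> ep * theta2 (J * \<tau> + NN * z / Lc) (NN * \<tau>) - em * theta2 (J * \<tau> - NN * z / Lc) (NN * \<tau>)
        | D \<Rightarrow> ep * theta2 (J * \<tau> + NN * z / Lc) (NN * \<tau>) + em * theta2 (J * \<tau> - NN * z / Lc) (NN * \<tau>)))"

definition hfun :: "rtype \<Rightarrow> nat \<Rightarrow> real \<Rightarrow> real \<Rightarrow> complex \<Rightarrow> nat \<Rightarrow> complex" where
  "hfun t N L W \<tau> j =
    (let J = complex_of_real (Jidx t j); NN = complex_of_real (calN t N);
         e = exp (- 2 * \<tau> * pi * \<i> * J^2 / NN);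
         c = complex_of_real (L * W / sqrt (2 * calN t N * Im \<tau>))
     in (case t of
          A \<Rightarrow> c * e
        | B \<Rightarrow> (if j = 1 then 4 * c * e else 2 * c * e)
        | Bv \<Rightarrow> (if j = 1 then 4 * c * e else 2 * c * e)
        | C \<Rightarrow> 2 * c * e
        | Cv \<Rightarrow> 2 * c * e
        | BC \<Rightarrow> 2 * c * e
        | D \<Rightarrow> (if j = 1 \<or> j = N then 4 * c * e else 2 * c * e)))"

definition Kern :: "rtype \<Rightarrow> nat \<Rightarrow> real \<Rightarrow> real \<Rightarrow> complex \<Rightarrow> complex \<Rightarrow> complex \<Rightarrow> complex" where
  "Kern t N L W \<tau> z z' =
     complex_of_real (exp (- pi * calN t N * ((Im z)^2 + (Im z')^2) / (L * W)))
     * (\<Sum>n = 1..N. Mfun t N L \<tau> n z * cnj (Mfun t N L \<tau> n z') / hfun t N L W \<tau> n)"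

definition KA :: "real \<Rightarrow> real \<Rightarrow> complex \<Rightarrow> complex \<Rightarrow> complex" where
  "KA W \<rho> z z' =
     (let r = complex_of_real (sqrt \<rho>); w = complex_of_real W; p = complex_of_real \<rho> in
     complex_of_real (sqrt 2 * \<rho> * exp (- pi * \<rho> * ((Im z)^2 + (Im z')^2)))
     * integral {0 .. sqrt \<rho> * W} (\<lambda>s::real.
         exp (- 2 * pi * (complex_of_real s)^2 + 2 * pi * \<i> * r * (z - cnj z') * complex_of_real s)
         * theta2 (r * w * (\<i> * complex_of_real s + r * z)) (\<i> * p * w^2)
         * theta2 (r * w * (\<i> * complex_of_real s - r * cnj z')) (\<i> * p * w^2)))"

definition theta_mu :: "nat \<Rightarrow> complex \<Rightarrow> complex \<Rightarrow> complex" where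
  "theta_mu \<mu> = (if \<mu> = 1 then theta1 else theta2)"

definition I1 :: "nat \<Rightarrow> real \<Rightarrow> real \<Rightarrow> complex \<Rightarrow> complex \<Rightarrow> complex" where
  "I1 \<mu> W \<rho> z z' =
     (let r = complex_of_real (sqrt \<rho>); w = complex_of_real W; p = complex_of_real \<rho> in
     integral {- sqrt \<rho> * W .. sqrt \<rho> * W} (\<lambda>s::real.
         exp (- pi * (complex_of_real s)^2 + 2 * pi * \<i> * r * (z - cnj z') * complex_of_real s)
         * theta_mu \<mu> (r * w * (\<i> * complex_of_real s + 2 * r * z)) (2 * \<i> * p * w^2)
         * theta_mu \<mu> (r * w * (\<i> * complex_of_real s - 2 * r * cnj z')) (2 * \<i> * p * w^2)))"

definition I2 :: "nat \<Rightarrow> real \<Rightarrow> real \<Rightarrow> complex \<Rightarrow> complex \<Rightarrow> complex" where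
  "I2 \<mu> W \<rho> z z' =
     (let r = complex_of_real (sqrt \<rho>); w = complex_of_real W; p = complex_of_real \<rho> in
     integral {- sqrt \<rho> * W .. sqrt \<rho> * W} (\<lambda>s::real.
         exp (- pi * (complex_of_real s)^2 + 2 * pi * \<i> * r * (z + cnj z') * complex_of_real s)
         * theta_mu \<mu> (r * w * (\<i> * complex_of_real s + 2 * r * z)) (2 * \<i> * p * w^2)
         * theta_mu \<mu> (r * w * (\<i> * complex_of_real s + 2 * r * cnj z')) (2 * \<i> * p * w^2)))"

definition KB :: "real \<Rightarrow> real \<Rightarrow> complex \<Rightarrow> complex \<Rightarrow> complex" where
  "KB W \<rho> z z' = - complex_of_real (\<rho> * exp (- 2 * pi * \<rho> * ((Im z)^2 + (Im z')^2)))
                   * (I1 1 W \<rho> z z' - I2 1 W \<rho> z z')"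

definition KC :: "real \<Rightarrow> real \<Rightarrow> complex \<Rightarrow> complex \<Rightarrow> complex" where
  "KC W \<rho> z z' = complex_of_real (\<rho> * exp (- 2 * pi * \<rho> * ((Im z)^2 + (Im z')^2)))
                   * (I1 2 W \<rho> z z' - I2 2 W \<rho> z z')"

definition KD :: "real \<Rightarrow> real \<Rightarrow> complex \<Rightarrow> complex \<Rightarrow> complex" where
  "KD W \<rho> z z' = complex_of_real (\<rho> * exp (- 2 * pi * \<rho> * ((Im z)^2 + (Im z')^2)))
                   * (I1 2 W \<rho> z z' + I2 2 W \<rho> z z')"

definition KN :: "rtype \<Rightarrow> real \<Rightarrow> real \<Rightarrow> nat \<Rightarrow> complex \<Rightarrow> complex \<Rightarrow> complex" where
  "KN t W \<rho> N z z' =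
     (let L = real N / (\<rho> * W) in Kern t N L W (\<i> * complex_of_real (W / L)) z z')"

end

theory Submission
  imports Defs
begin

(*
  With L = N/(rho W) and tau = i W/L, the n-th summand of K^{R_N}(z,z') is
  (sqrt rho W/N) G(k_N, l_n) times a weight that is 1, except that it is 1/2 at n = 1 for
  B_N, B_N^vee, D_N and at n = N for D_N. Here k_N = calN/N tends to k_0 in {1, 2},
  l_n = sqrt rho W J(n)/N lies in the n-th cell of a uniform partition of [0, sqrt rho W], and
  G(k, l) is built from theta functions with modulus i k rho W^2. The theta series converge
  locally uniformly, so G is continuous on [1,4] x [0, sqrt rho W]; hence K^{R_N} is a Riemann
  sum of G(k_N, -) and tends to the integral of G(k_0, -), the exceptional weights contributing
  O(1/N).
  For A_{N-1} (k_0 = 1) this integral is K^A. For the other types M_n has a second term obtained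
  by v |-> -v; expanding M(z) conj(M(z')) with the parity and conjugation rules of theta_1 and
  theta_2 yields I_1- and I_2-integrands at lambda and at -lambda, which folds the integral over
  [0, a] into the integrals over [-a, a].
*)

section \<open>Theta series\<close>

definition theta_term :: "complex \<Rightarrow> complex \<Rightarrow> int \<Rightarrow> complex" where
  "theta_term v T n = exp (pi * \<i> * T * (of_int n - 1/2)^2) * exp ((2 * of_int n - 1) * pi * \<i> * v)"

lemma theta2_eq_infsum: "theta2 v T = (\<Sum>\<^sub>\<infinity>n. theta_term v T n)"
  unfolding theta2_def theta_term_def ..

lemma theta1_eq_infsum: "theta1 v T = \<i> * (\<Sum>\<^sub>\<infinity>n. (-1) powi n * theta_term v T n)"
  unfolding theta1_def theta_term_def by (simp add: mult.assoc)

lemma norm_theta_term: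
  "norm (theta_term v T n) = exp (- pi * Im T * (of_int n - 1/2)^2 - (2 * of_int n - 1) * pi * Im v)"
proof -
  have "(of_int n - 1/2 :: complex)^2 = of_real ((of_int n - 1/2)^2)"
       "(2 * of_int n - 1 :: complex) = of_real (2 * of_int n - 1)" by simp_all
  then show ?thesis
    unfolding theta_term_def norm_mult norm_exp_eq_Re by (simp add: exp_add[symmetric] algebra_simps)
qed

lemma summable_on_exp_neg_abs_int: "(\<lambda>n::int. exp (- \<bar>real_of_int n\<bar>)) summable_on UNIV"
proof -
  have geometric: "(\<lambda>m::nat. exp (- real m)) summable_on UNIV"
  proof (rule norm_summable_imp_summable_on)
    have "summable (\<lambda>m::nat. exp (-1::real) ^ m)" by (rule summable_geometric) simp
    then show "summable (\<lambda>m::nat. norm (exp (- real m)))" by (simp add: exp_of_nat_mult[symmetric])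
  qed
  have "(\<lambda>n::int. exp (- \<bar>real_of_int n\<bar>)) summable_on range int"
    using geometric by (subst summable_on_reindex) (auto simp: o_def)
  moreover have "(\<lambda>n::int. exp (- \<bar>real_of_int n\<bar>)) summable_on range (\<lambda>m. - int m)"
    using geometric by (subst summable_on_reindex) (auto simp: o_def inj_on_def)
  moreover have "n \<in> range int \<union> range (\<lambda>m. - int m)" for n :: int
    by (cases n rule: int_cases2) auto
  ultimately show ?thesis
    by (metis summable_on_union UNIV_eq_I)
qed

lemma neg_square_plus_linear_le:
  fixes a b x :: real
  assumes "a > 0"
  shows "- a * x^2 + b * \<bar>x\<bar> \<le> (b + 1)^2 / (4 * a) - \<bar>x\<bar>"
proof -
  have "0 \<le> a * (\<bar>x\<bar> - (b + 1) / (2 * a))^2"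
    using assms by simp
  also have "\<dots> = a * x^2 - (b + 1) * \<bar>x\<bar> + (b + 1)^2 / (4 * a)"
    using assms by (simp add: power2_eq_square field_simps)
  finally show ?thesis
    by (simp add: algebra_simps)
qed

lemma norm_theta_term_le:
  assumes "0 < t" "t \<le> Im T" "\<bar>Im v\<bar> \<le> b"
  shows "norm (theta_term v T n) \<le> exp ((2*pi*b + 1)^2 / (4*(pi*t)) + 1/2) * exp (- \<bar>real_of_int n\<bar>)"
proof -
  define x where "x = real_of_int n - 1/2"
  have "- pi * Im T * x^2 \<le> - (pi * t) * x^2"
    using assms by (intro mult_right_mono) auto
  moreover have "- (2 * real_of_int n - 1) * pi * Im v \<le> (2*pi*b) * \<bar>x\<bar>"
  proof -
    have "- (2 * real_of_int n - 1) * pi * Im v \<le> \<bar>2 * pi * x * Im v\<bar>"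
      unfolding x_def by (simp add: algebra_simps)
    also have "\<dots> = 2 * pi * \<bar>x\<bar> * \<bar>Im v\<bar>"
      by (simp add: abs_mult)
    also have "\<dots> \<le> 2 * pi * \<bar>x\<bar> * b"
      using assms by (intro mult_left_mono) auto
    finally show ?thesis
      by (simp add: mult_ac)
  qed
  moreover have "- (pi * t) * x^2 + (2*pi*b) * \<bar>x\<bar> \<le> (2*pi*b + 1)^2 / (4*(pi*t)) - \<bar>x\<bar>"
    using assms by (intro neg_square_plus_linear_le) auto
  moreover have "- \<bar>x\<bar> \<le> 1/2 - \<bar>real_of_int n\<bar>"
    unfolding x_def by linarith
  ultimately have "- pi * Im T * x^2 - (2 * real_of_int n - 1) * pi * Im v
      \<le> (2*pi*b + 1)^2 / (4*(pi*t)) + 1/2 + (- \<bar>real_of_int n\<bar>)"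
    by linarith
  then show ?thesis
    unfolding norm_theta_term x_def[symmetric] exp_add[symmetric] by simp
qed

lemma continuous_on_theta_series:
  fixes S :: "'a::topological_space set"
  assumes S: "compact S" and V: "continuous_on S V" and T: "continuous_on S T"
    and Im_T: "\<And>x. x \<in> S \<Longrightarrow> Im (T x) > 0" and c: "\<And>n. norm (c n) \<le> 1"
  shows "continuous_on S (\<lambda>x. \<Sum>\<^sub>\<infinity>n. c n * theta_term (V x) (T x) n)"
proof (cases "S = {}")
  case False
  obtain x0 where x0: "x0 \<in> S" "\<And>y. y \<in> S \<Longrightarrow> Im (T x0) \<le> Im (T y)"
    using continuous_attains_inf[OF S False continuous_on_Im[OF T]] by blast
  have "compact ((\<lambda>x. Im (V x)) ` S)"
    by (rule compact_continuous_image[OF continuous_on_Im[OF V] S])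
  then obtain b where "\<forall>y \<in> (\<lambda>x. Im (V x)) ` S. norm y \<le> b"
    using compact_imp_bounded bounded_iff by blast
  then have b: "\<And>x. x \<in> S \<Longrightarrow> \<bar>Im (V x)\<bar> \<le> b"
    by auto
  define K where "K = exp ((2*pi*b + 1)^2 / (4*(pi*Im (T x0))) + 1/2)"
  have limit: "uniform_limit S (\<lambda>X x. \<Sum>n\<in>X. c n * theta_term (V x) (T x) n)
      (\<lambda>x. \<Sum>\<^sub>\<infinity>n. c n * theta_term (V x) (T x) n) (finite_subsets_at_top UNIV)"
  proof (rule Weierstrass_m_test_general)
    fix n :: int and x assume "x \<in> S"
    then have "norm (theta_term (V x) (T x) n) \<le> K * exp (- \<bar>real_of_int n\<bar>)"
      unfolding K_def using x0 b Im_T by (intro norm_theta_term_le) auto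
    then show "norm (c n * theta_term (V x) (T x) n) \<le> K * exp (- \<bar>real_of_int n\<bar>)"
      unfolding norm_mult by (rule order_trans[OF mult_left_le_one_le[OF norm_ge_zero norm_ge_zero c]])
  qed (rule summable_on_cmult_right[OF summable_on_exp_neg_abs_int])
  have partial_sums: "\<forall>\<^sub>F X in finite_subsets_at_top UNIV.
      continuous_on S (\<lambda>x. \<Sum>n\<in>X. c n * theta_term (V x) (T x) n)"
    unfolding theta_term_def by (intro always_eventually allI continuous_on_sum continuous_intros V T)
  show ?thesis
    by (rule uniform_limit_theorem[OF partial_sums limit]) simp
qed simp

lemma continuous_on_theta2:
  fixes S :: "'a::topological_space set"
  assumes "compact S" "continuous_on S V" "continuous_on S T" "\<And>x. x \<in> S \<Longrightarrow> Im (T x) > 0"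
  shows "continuous_on S (\<lambda>x. theta2 (V x) (T x))"
  using continuous_on_theta_series[OF assms, of "\<lambda>_. 1"] unfolding theta2_eq_infsum by simp

lemma continuous_on_theta1:
  fixes S :: "'a::topological_space set"
  assumes "compact S" "continuous_on S V" "continuous_on S T" "\<And>x. x \<in> S \<Longrightarrow> Im (T x) > 0"
  shows "continuous_on S (\<lambda>x. theta1 (V x) (T x))"
proof -
  have "norm ((-1::complex) powi n) \<le> 1" for n
    by (simp add: norm_power_int)
  then show ?thesis
    unfolding theta1_eq_infsum by (intro continuous_intros continuous_on_theta_series[OF assms])
qed

lemma continuous_on_theta:
  fixes S :: "'a::topological_space set"
  assumes "th \<in> {theta1, theta2}" "compact S" "continuous_on S V" "continuous_on S T"
    "\<And>x. x \<in> S \<Longrightarrow> Im (T x) > 0"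
  shows "continuous_on S (\<lambda>x. th (V x) (T x))"
  using assms(1) continuous_on_theta1[OF assms(2-)] continuous_on_theta2[OF assms(2-)] by auto

lemma cnj_theta_term: "cnj (theta_term v T n) = theta_term (- cnj v) (- cnj T) n"
  unfolding theta_term_def by (simp add: exp_cnj algebra_simps)

lemma cnj_theta2: "cnj (theta2 v T) = theta2 (- cnj v) (- cnj T)"
  unfolding theta2_eq_infsum infsum_cnj[symmetric] cnj_theta_term ..

lemma cnj_theta1: "cnj (theta1 v T) = - theta1 (- cnj v) (- cnj T)"
proof -
  have "cnj ((-1) powi n * theta_term v T n) = (-1) powi n * theta_term (- cnj v) (- cnj T) n" for n
    by (simp add: cnj_theta_term power_int_minus_left)
  then show ?thesis
    unfolding theta1_eq_infsum complex_cnj_mult infsum_cnj[symmetric] by simp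
qed

lemma theta_term_reflect: "theta_term v T (1 - n) = theta_term (- v) T n"
proof -
  have "(of_int (1 - n) - 1/2 :: complex)^2 = (of_int n - 1/2)^2"
    by (simp add: power2_eq_square algebra_simps)
  moreover have "(2 * of_int (1 - n) - 1) * pi * \<i> * v = (2 * of_int n - 1) * pi * \<i> * (- v)"
    by (simp add: algebra_simps)
  ultimately show ?thesis
    unfolding theta_term_def by simp
qed

lemma bij_betw_reflect_int: "bij_betw (\<lambda>n::int. 1 - n) UNIV UNIV"
  by (rule bij_betwI[where g = "\<lambda>n. 1 - n"]) auto

lemma theta2_minus: "theta2 (- v) T = theta2 v T"
  unfolding theta2_eq_infsum
  by (subst infsum_reindex_bij_betw[OF bij_betw_reflect_int, symmetric]) (simp add: theta_term_reflect)

lemma theta1_minus: "theta1 (- v) T = - theta1 v T"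
proof -
  have "(\<Sum>\<^sub>\<infinity>n. (-1) powi n * theta_term v T n) = (\<Sum>\<^sub>\<infinity>n. (-1) powi (1 - n) * theta_term v T (1 - n))"
    by (rule infsum_reindex_bij_betw[OF bij_betw_reflect_int, symmetric])
  also have "\<dots> = - (\<Sum>\<^sub>\<infinity>n. (-1) powi n * theta_term (- v) T n)"
    unfolding theta_term_reflect infsum_uminus[symmetric]
    by (intro infsum_cong) (simp add: power_int_minus_left)
  finally show ?thesis
    unfolding theta1_eq_infsum by simp
qed

section \<open>Riemann sums with a moving parameter\<close>

lemma integral_eq_sum_uniform_cells:
  fixes f :: "real \<Rightarrow> 'a::banach"
  assumes a: "0 < a" and N: "0 < N" and f: "continuous_on {0..a} f"
  shows "integral {0..a} f = (\<Sum>j=1..N. integral {a*(real j - 1)/N .. a*real j/N} f)"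
proof -
  have "integral {0..a*real n/N} f = (\<Sum>j=1..n. integral {a*(real j - 1)/N .. a*real j/N} f)"
    if "n \<le> N" for n
    using that
  proof (induction n)
    case (Suc n)
    have "a * real (Suc n) \<le> a * real N"
      using a Suc.prems by (intro mult_left_mono) auto
    then have "a*real n/N \<le> a*real (Suc n)/N" "a*real (Suc n)/N \<le> a"
      using a N by (simp_all add: divide_right_mono field_simps)
    moreover have "0 \<le> a*real n/N"
      using a by simp
    ultimately have "integral {0..a*real (Suc n)/N} f
        = integral {0..a*real n/N} f + integral {a*real n/N..a*real (Suc n)/N} f"
      by (intro Henstock_Kurzweil_Integration.integral_combine[symmetric] integrable_continuous_real
          continuous_on_subset[OF f]) auto
    then show ?case
      using Suc by simp
  qed simp
  from this[of N] show ?thesis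
    using N by simp
qed

lemma norm_Riemann_cell_error_le:
  fixes f :: "real \<Rightarrow> 'a::banach"
  assumes lu: "l \<le> u" and f: "continuous_on {l..u} f" and close: "\<And>x. x \<in> {l..u} \<Longrightarrow> norm (c - f x) \<le> e"
  shows "norm ((u - l) *\<^sub>R c - integral {l..u} f) \<le> e * (u - l)"
proof -
  have "((\<lambda>x. c) has_integral (u - l) *\<^sub>R c) {l..u}"
    using has_integral_const_real[of c l u] lu by simp
  then have "((\<lambda>x. c - f x) has_integral (u - l) *\<^sub>R c - integral {l..u} f) {l..u}"
    using f by (intro has_integral_diff integrable_integral integrable_continuous_real)
  moreover have "0 \<le> e"
    using close[of l] lu by (meson atLeastAtMost_iff norm_ge_zero order_refl order_trans)
  ultimately have "norm ((u - l) *\<^sub>R c - integral {l..u} f) \<le> e * measure lborel {l..u}"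
    using close by (intro has_integral_bound_real[OF _ finite.emptyI]) auto
  then show ?thesis
    using lu by simp
qed

lemma norm_Riemann_sum_error_le:
  fixes f :: "real \<Rightarrow> 'a::banach"
  assumes a: "0 < a" and N: "0 < N" and f: "continuous_on {0..a} f"
    and close: "\<And>j x. 1 \<le> j \<Longrightarrow> j \<le> N \<Longrightarrow> x \<in> {a*(real j - 1)/N .. a*real j/N} \<Longrightarrow> norm (c j - f x) \<le> e"
  shows "norm ((a / N) *\<^sub>R (\<Sum>j=1..N. c j) - integral {0..a} f) \<le> e * a"
proof -
  have cell: "norm ((a / N) *\<^sub>R c j - integral {a*(real j - 1)/N .. a*real j/N} f) \<le> e * (a / N)"
    if j: "1 \<le> j" "j \<le> N" for j
  proof -
    define l u where "l = a*(real j - 1)/N" and "u = a*real j/N"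
    have lu: "l \<le> u" "0 \<le> l" "u \<le> a" "u - l = a/N"
      using a N j unfolding l_def u_def by (auto simp: field_simps divide_right_mono)
    then have "norm ((u - l) *\<^sub>R c j - integral {l..u} f) \<le> e * (u - l)"
      using close[OF j] unfolding l_def[symmetric] u_def[symmetric]
      by (intro norm_Riemann_cell_error_le continuous_on_subset[OF f]) auto
    then show ?thesis
      unfolding lu(4) unfolding l_def u_def .
  qed
  have "norm ((a / N) *\<^sub>R (\<Sum>j=1..N. c j) - integral {0..a} f)
      = norm (\<Sum>j=1..N. (a / N) *\<^sub>R c j - integral {a*(real j - 1)/N .. a*real j/N} f)"
    using integral_eq_sum_uniform_cells[OF a N f] by (simp add: sum_subtractf scaleR_sum_right)
  also have "\<dots> \<le> (\<Sum>j=1..N. e * (a / N))"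
    by (rule order_trans[OF norm_sum sum_mono]) (use cell in auto)
  also have "\<dots> = e * a"
    using N by simp
  finally show ?thesis .
qed

lemma Riemann_sum_tendsto_integral:
  fixes G :: "real \<times> real \<Rightarrow> 'a::banach"
  assumes a: "0 < a" and K: "compact K" and G: "continuous_on (K \<times> {0..a}) G"
    and k: "k \<longlonglongrightarrow> k0" and k_in: "\<forall>\<^sub>F N in sequentially. k N \<in> K"
    and s: "\<And>N j. 1 \<le> j \<Longrightarrow> j \<le> N \<Longrightarrow> s N j \<in> {a*(real j - 1)/N .. a*real j/N}"
  shows "(\<lambda>N. (a / N) *\<^sub>R (\<Sum>j=1..N. G (k N, s N j))) \<longlonglongrightarrow> integral {0..a} (\<lambda>x. G (k0, x))"
proof (rule LIMSEQ_I)
  fix e :: real assume e: "e > 0"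
  have k0: "k0 \<in> K"
    using Lim_in_closed_set[OF compact_imp_closed[OF K] k_in _ k] by simp
  have G0: "continuous_on {0..a} (\<lambda>x. G (k0, x))"
    using k0 by (intro continuous_on_compose2[OF G]) (auto intro!: continuous_intros)
  have "uniformly_continuous_on (K \<times> {0..a}) G"
    using G K by (intro compact_uniformly_continuous compact_Times) auto
  then obtain d where d: "d > 0" and close: "\<And>p q. p \<in> K \<times> {0..a} \<Longrightarrow> q \<in> K \<times> {0..a} \<Longrightarrow>
      dist p q < d \<Longrightarrow> dist (G p) (G q) < e / (2*a)"
    unfolding uniformly_continuous_on_def using e a by (metis divide_pos_pos mult_pos_pos zero_less_numeral)
  have "\<forall>\<^sub>F N in sequentially. k N \<in> K \<and> dist (k N) k0 < d/2 \<and> a / N < d/2 \<and> 0 < N"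
    using k_in tendstoD[OF k half_gt_zero[OF d]] tendstoD[OF lim_const_over_n[of a] half_gt_zero[OF d]]
      eventually_gt_at_top[of 0] by eventually_elim (use a in \<open>auto simp: dist_real_def\<close>)
  then obtain N0 where N0: "\<And>N. N \<ge> N0 \<Longrightarrow> k N \<in> K \<and> dist (k N) k0 < d/2 \<and> a / N < d/2 \<and> 0 < N"
    unfolding eventually_sequentially by blast
  show "\<exists>N0. \<forall>N\<ge>N0. norm ((a / N) *\<^sub>R (\<Sum>j=1..N. G (k N, s N j)) - integral {0..a} (\<lambda>x. G (k0, x))) < e"
  proof (intro exI allI impI)
    fix N assume "N \<ge> N0"
    note N = N0[OF this]
    have "norm (G (k N, s N j) - G (k0, x)) \<le> e / (2*a)"
      if j: "1 \<le> j" "j \<le> N" and x: "x \<in> {a*(real j - 1)/N .. a*real j/N}" for j x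
    proof -
      have cell: "0 \<le> a*(real j - 1)/N" "a*real j/N \<le> a" "a*real j/N - a*(real j - 1)/N = a/N"
        using a N j by (auto simp: field_simps)
      have in_box: "(k N, s N j) \<in> K \<times> {0..a}" "(k0, x) \<in> K \<times> {0..a}"
        using N k0 s[OF j] x cell by auto
      have "dist (s N j) x \<le> a / N"
        using s[OF j] x cell(3) unfolding dist_real_def by (auto simp: abs_le_iff)
      moreover have "dist (k N, s N j) (k0, x) \<le> dist (k N) k0 + dist (s N j) x"
        using sqrt_sum_squares_le_sum_abs[of "dist (k N) k0" "dist (s N j) x"] by (simp add: dist_Pair_Pair)
      ultimately have "dist (k N, s N j) (k0, x) < d"
        using N by linarith
      then show ?thesis
        using close[OF in_box] by (simp add: dist_norm)
    qed
    then have "norm ((a / N) *\<^sub>R (\<Sum>j=1..N. G (k N, s N j)) - integral {0..a} (\<lambda>x. G (k0, x))) \<le> e / (2*a) * a"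
      using N by (intro norm_Riemann_sum_error_le[OF a _ G0]) auto
    also have "\<dots> < e"
      using a e by simp
    finally show "norm ((a / N) *\<^sub>R (\<Sum>j=1..N. G (k N, s N j)) - integral {0..a} (\<lambda>x. G (k0, x))) < e" .
  qed
qed

lemma Riemann_summand_tendsto_zero:
  fixes G :: "'b::topological_space \<Rightarrow> 'a::real_normed_vector"
  assumes "compact S" "continuous_on S G" "\<forall>\<^sub>F N in sequentially. p N \<in> S"
  shows "(\<lambda>N. (a / real N) *\<^sub>R G (p N)) \<longlonglongrightarrow> 0"
proof -
  have "bounded (G ` S)"
    by (rule compact_imp_bounded[OF compact_continuous_image[OF assms(2,1)]])
  then obtain b where "\<forall>y \<in> G ` S. norm y \<le> b"
    unfolding bounded_iff by blast
  then have "Bfun (\<lambda>N. G (p N)) sequentially"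
    using assms(3) by (intro BfunI[where K = b]) (auto elim: eventually_mono)
  moreover have "Zfun (\<lambda>N. a / real N) sequentially"
    using lim_const_over_n[of a] by (simp add: tendsto_Zfun_iff)
  ultimately show ?thesis
    by (simp add: tendsto_Zfun_iff bounded_bilinear.Zfun_prod_Bfun[OF bounded_bilinear_scaleR])
qed

lemma integral_fold_symmetric:
  fixes H :: "real \<Rightarrow> 'a::banach"
  assumes H: "continuous_on {-a..a} H" and a: "a \<ge> 0"
  shows "integral {0..a} (\<lambda>l. H l + H (-l)) = integral {-a..a} H"
proof -
  have "continuous_on {0..a} H" "continuous_on {0..a} (\<lambda>l. H (-l))"
    using a by (auto intro!: continuous_on_subset[OF H] continuous_on_compose2[OF H] continuous_intros)
  moreover have "integral {-a..0} H = integral {0..a} (\<lambda>l. H (-l))"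
    using Henstock_Kurzweil_Integration.integral_reflect_real[of a 0 "\<lambda>l. H (-l)"] by simp
  moreover have "integral {-a..a} H = integral {-a..0} H + integral {0..a} H"
    using a integrable_continuous_real[OF H]
    by (intro Henstock_Kurzweil_Integration.integral_combine[symmetric]) auto
  ultimately show ?thesis
    by (simp add: integral_add integrable_continuous_real)
qed

section \<open>The kernels as Riemann sums\<close>

definition theta_of :: "rtype \<Rightarrow> complex \<Rightarrow> complex \<Rightarrow> complex" where
  "theta_of t = (if t = B \<or> t = Bv then theta1 else theta2)"

text \<open>M_j is the first term of theta_pair alone for A_{N-1}, hence the sign 0.\<close>
definition mirror_sign :: "rtype \<Rightarrow> complex" where
  "mirror_sign t = (if t = A then 0 else if t = D then 1 else -1)"

definition theta_pair ::
    "(complex \<Rightarrow> complex \<Rightarrow> complex) \<Rightarrow> complex \<Rightarrow> complex \<Rightarrow> complex \<Rightarrow> complex \<Rightarrow> complex \<Rightarrow> complex \<Rightarrow> complex"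
  where "theta_pair th \<sigma> \<alpha> \<beta> v T z =
    exp (2 * pi * \<i> * \<alpha> * z) * th (v + \<beta> * z) T + \<sigma> * exp (- (2 * pi * \<i> * \<alpha> * z)) * th (v - \<beta> * z) T"

lemma Mfun_eq_theta_pair:
  "Mfun t N L (\<i> * of_real w) j z = theta_pair (theta_of t) (mirror_sign t)
     (of_real (Jidx t j / L)) (of_real (calN t N / L))
     (\<i> * of_real (Jidx t j * w)) (\<i> * of_real (calN t N * w)) z"
  by (cases t) (simp_all add: Mfun_def theta_pair_def theta_of_def mirror_sign_def Let_def mult_ac)

text \<open>M_j at size N as a function of (k, l) = (calN/N, sqrt \<rho> W J(j)/N), which ranges over a
  compact box on which it is jointly continuous.\<close>
definition M_profile ::
    "(complex \<Rightarrow> complex \<Rightarrow> complex) \<Rightarrow> complex \<Rightarrow> real \<Rightarrow> real \<Rightarrow> real \<times> real \<Rightarrow> complex \<Rightarrow> complex"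
  where "M_profile th \<sigma> \<rho> W p z = theta_pair th \<sigma> (of_real (sqrt \<rho> * snd p)) (of_real (fst p * \<rho> * W))
     (\<i> * of_real (sqrt \<rho> * W * snd p)) (\<i> * of_real (fst p * \<rho> * W^2)) z"

lemma Mfun_eq_M_profile:
  assumes \<rho>: "\<rho> > 0" and W: "W > 0" and N: "N > 0" and L: "L = real N / (\<rho> * W)"
  shows "Mfun t N L (\<i> * of_real (W / L)) j z = M_profile (theta_of t) (mirror_sign t) \<rho> W
      (calN t N / N, sqrt \<rho> * W * Jidx t j / N) z"
proof -
  have "sqrt \<rho> * sqrt \<rho> = \<rho>"
    using \<rho> by simp
  then have "Jidx t j / L = sqrt \<rho> * (sqrt \<rho> * W * Jidx t j / real N)"
    "calN t N / L = calN t N / real N * \<rho> * W"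
    "Jidx t j * (W / L) = sqrt \<rho> * W * (sqrt \<rho> * W * Jidx t j / real N)"
    "calN t N * (W / L) = calN t N / real N * \<rho> * W^2"
    using W N unfolding L by (simp_all add: field_simps power2_eq_square)
  then show ?thesis
    unfolding Mfun_eq_theta_pair M_profile_def prod.sel by simp
qed

definition h_weight :: "rtype \<Rightarrow> nat \<Rightarrow> nat \<Rightarrow> real" where
  "h_weight t N j = (if t = A then 1 else if (t = B \<or> t = Bv) \<and> j = 1 then 4
     else if t = D \<and> (j = 1 \<or> j = N) then 4 else 2)"

lemma hfun_eq:
  fixes j :: nat
  assumes \<rho>: "\<rho> > 0" and W: "W > 0" and N: "N > 0" and L: "L = real N / (\<rho> * W)" and calN: "calN t N > 0"
  defines "k \<equiv> calN t N / N" and "l \<equiv> sqrt \<rho> * W * Jidx t j / N"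
  shows "hfun t N L W (\<i> * of_real (W / L)) j
     = of_real (h_weight t N j * (N / (\<rho> * sqrt (2 * k) * (sqrt \<rho> * W))) * exp (2 * pi * l^2 / k))"
proof -
  have k: "k > 0"
    using calN N unfolding k_def by simp
  have "2 * calN t N * (W / L) = (sqrt (2 * k) * (sqrt \<rho> * W))^2"
    using k \<rho> W N unfolding L k_def by (simp add: power_mult_distrib field_simps power2_eq_square)
  then have "sqrt (2 * calN t N * (W / L)) = sqrt (2 * k) * (sqrt \<rho> * W)"
    using k \<rho> W by simp
  then have c: "L * W / sqrt (2 * calN t N * (W / L)) = N / (\<rho> * sqrt (2 * k) * (sqrt \<rho> * W))"
    using \<rho> W unfolding L by (simp add: field_simps)
  have "2 * pi * l^2 / k = 2 * (W / L) * pi * Jidx t j ^ 2 / calN t N"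
    using \<rho> W N calN unfolding L k_def l_def by (simp add: field_simps power2_eq_square)
  then have e: "exp (- 2 * (\<i> * of_real (W / L)) * pi * \<i> * of_real (Jidx t j) ^ 2 / of_real (calN t N))
      = of_real (exp (2 * pi * l^2 / k))"
    by (simp flip: exp_of_real add: mult_ac)
  have im: "Im (\<i> * of_real (W / L)) = W / L"
    by simp
  show ?thesis
    unfolding hfun_def Let_def e im c by (cases t) (simp_all add: h_weight_def)
qed

definition calN_limit :: "rtype \<Rightarrow> real" where
  "calN_limit t = (if t = A then 1 else 2)"

lemma calN_div_tendsto: "(\<lambda>N. calN t N / real N) \<longlonglongrightarrow> calN_limit t"
proof -
  define c where "c = calN t 0"
  have c: "calN t N = calN_limit t * real N + c" for N
    unfolding c_def by (cases t) (simp_all add: calN_limit_def)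
  have "(\<lambda>N. calN_limit t + c / real N) \<longlonglongrightarrow> calN_limit t"
    using tendsto_add[OF tendsto_const lim_const_over_n] by simp
  moreover have "\<forall>\<^sub>F N in sequentially. calN_limit t + c / real N = calN t N / real N"
    using eventually_gt_at_top[of 0] by eventually_elim (simp add: c field_simps)
  ultimately show ?thesis
    by (rule Lim_transform_eventually)
qed

lemma calN_div_in_box: "N \<ge> 2 \<Longrightarrow> calN t N / real N \<in> {1..4}"
  by (cases t) (auto simp: field_simps)

lemma calN_pos: "N \<ge> 2 \<Longrightarrow> calN t N > 0"
  by (cases t) auto

lemma Jidx_bounds: "1 \<le> j \<Longrightarrow> real j - 1 \<le> Jidx t j \<and> Jidx t j \<le> real j"
  by (cases t) auto

lemma calN_limit_div_h_weight:
  "N \<ge> 2 \<Longrightarrow> calN_limit t / h_weight t N j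
     = 1 - of_bool (j = 1 \<and> t \<in> {B, Bv, D}) / 2 - of_bool (j = N \<and> t = D) / 2"
  by (cases t) (auto simp: calN_limit_def h_weight_def)

text \<open>Normalised by calN_limit, the bulk value of h_weight, so that the Riemann sum has weight 1
  away from the boundary indices.\<close>
definition kernel_density :: "rtype \<Rightarrow> real \<Rightarrow> real \<Rightarrow> complex \<Rightarrow> complex \<Rightarrow> real \<times> real \<Rightarrow> complex" where
  "kernel_density t \<rho> W z z' p =
     of_real (\<rho> * sqrt (2 * fst p) / calN_limit t * exp (- pi * fst p * \<rho> * ((Im z)^2 + (Im z')^2))
       * exp (- 2 * pi * (snd p)^2 / fst p))
     * M_profile (theta_of t) (mirror_sign t) \<rho> W p z * cnj (M_profile (theta_of t) (mirror_sign t) \<rho> W p z')"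

lemma Kern_summand_eq_kernel_density:
  fixes j :: nat
  assumes \<rho>: "\<rho> > 0" and W: "W > 0" and N: "N \<ge> 2" and L: "L = real N / (\<rho> * W)"
  defines "\<tau> \<equiv> \<i> * of_real (W / L)"
  shows "of_real (exp (- pi * calN t N * ((Im z)^2 + (Im z')^2) / (L * W)))
      * (Mfun t N L \<tau> j z * cnj (Mfun t N L \<tau> j z') / hfun t N L W \<tau> j)
    = (sqrt \<rho> * W / N) *\<^sub>R kernel_density t \<rho> W z z' (calN t N / N, sqrt \<rho> * W * Jidx t j / N)
      * of_real (calN_limit t / h_weight t N j)"
proof -
  define k l Y where "k = calN t N / N" and "l = sqrt \<rho> * W * Jidx t j / N"
    and "Y = (Im z)^2 + (Im z')^2"
  define X where "X = M_profile (theta_of t) (mirror_sign t) \<rho> W (k, l) z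
    * cnj (M_profile (theta_of t) (mirror_sign t) \<rho> W (k, l) z')"
  define D where "D = h_weight t N j * (N / (\<rho> * sqrt (2 * k) * (sqrt \<rho> * W))) * exp (2 * pi * l^2 / k)"
  have N0: "N > 0"
    using N by simp
  have k: "k > 0"
    using calN_pos[OF N] N unfolding k_def by simp
  have "- pi * calN t N * Y / (L * W) = - pi * k * \<rho> * Y"
    using W N unfolding L k_def by (simp add: field_simps)
  then have "of_real (exp (- pi * calN t N * Y / (L * W))) * (X / of_real D)
      = of_real (exp (- pi * k * \<rho> * Y) / D) * X"
    by (simp add: divide_inverse mult_ac)
  also have "exp (- pi * k * \<rho> * Y) / D = sqrt \<rho> * W / N * (\<rho> * sqrt (2 * k) / calN_limit t
      * exp (- pi * k * \<rho> * Y) * exp (- 2 * pi * l^2 / k)) * (calN_limit t / h_weight t N j)"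
  proof -
    have "exp (- 2 * pi * l^2 / k) = inverse (exp (2 * pi * l^2 / k))"
      by (simp add: exp_minus[symmetric])
    moreover have "calN_limit t > 0" "h_weight t N j > 0"
      by (simp_all add: calN_limit_def h_weight_def)
    ultimately show ?thesis
      unfolding D_def using \<rho> W N k by (simp add: field_simps)
  qed
  also have "of_real (sqrt \<rho> * W / N * (\<rho> * sqrt (2 * k) / calN_limit t
      * exp (- pi * k * \<rho> * Y) * exp (- 2 * pi * l^2 / k)) * (calN_limit t / h_weight t N j)) * X
    = (sqrt \<rho> * W / N) *\<^sub>R kernel_density t \<rho> W z z' (k, l) * of_real (calN_limit t / h_weight t N j)"
    unfolding kernel_density_def X_def Y_def prod.sel by (simp add: scaleR_conv_of_real mult_ac)
  finally show ?thesis
    unfolding \<tau>_def hfun_eq[OF \<rho> W N0 L calN_pos[OF N]] Mfun_eq_M_profile[OF \<rho> W N0 L]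
      k_def[symmetric] l_def[symmetric] Y_def[symmetric] X_def D_def
    by (simp add: mult.assoc)
qed

lemma continuous_on_M_profile:
  assumes th: "th \<in> {theta1, theta2}" and \<rho>: "\<rho> > 0" and W: "W > 0"
    and S: "compact S" and k: "\<And>p. p \<in> S \<Longrightarrow> fst p > 0"
  shows "continuous_on S (\<lambda>p. M_profile th \<sigma> \<rho> W p z)"
proof -
  have "Im (\<i> * of_real (fst p * \<rho> * W^2)) > 0" if "p \<in> S" for p
    using k[OF that] \<rho> W by simp
  then show ?thesis
    unfolding M_profile_def theta_pair_def
    by (intro continuous_intros continuous_on_theta[OF th S]) auto
qed

lemma continuous_on_kernel_density:
  assumes \<rho>: "\<rho> > 0" and W: "W > 0" and S: "compact S" and k: "\<And>p. p \<in> S \<Longrightarrow> fst p > 0"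
  shows "continuous_on S (kernel_density t \<rho> W z z')"
proof -
  have "theta_of t \<in> {theta1, theta2}"
    by (simp add: theta_of_def)
  note M = continuous_on_M_profile[OF this \<rho> W S k]
  have "calN_limit t \<noteq> 0" "\<And>p. p \<in> S \<Longrightarrow> fst p \<noteq> 0"
    using k by (auto simp: calN_limit_def dual_order.strict_implies_not_eq)
  then show ?thesis
    unfolding kernel_density_def[abs_def]
    by (intro continuous_intros M continuous_on_cnj) auto
qed

lemma KN_eq_Riemann_sum:
  fixes t :: rtype and z z' :: complex
  assumes \<rho>: "\<rho> > 0" and W: "W > 0" and N: "N \<ge> 2"
  defines "a \<equiv> sqrt \<rho> * W" and "G \<equiv> kernel_density t \<rho> W z z'"
    and "k \<equiv> calN t N / N" and "s \<equiv> \<lambda>j. sqrt \<rho> * W * Jidx t j / N"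
  shows "KN t W \<rho> N z z' = (a / N) *\<^sub>R (\<Sum>j=1..N. G (k, s j))
      - (of_bool (t \<in> {B, Bv, D}) / 2) *\<^sub>R ((a / N) *\<^sub>R G (k, s 1))
      - (of_bool (t = D) / 2) *\<^sub>R ((a / N) *\<^sub>R G (k, s N))"
proof -
  define X where "X j = (a / N) *\<^sub>R G (k, s j)" for j
  have "KN t W \<rho> N z z' = (\<Sum>j=1..N. (calN_limit t / h_weight t N j) *\<^sub>R X j)"
    unfolding KN_def Let_def Kern_def sum_distrib_left
    by (intro sum.cong refl trans[OF Kern_summand_eq_kernel_density[OF \<rho> W N refl]])
       (simp add: X_def G_def a_def k_def s_def scaleR_conv_of_real mult_ac)
  also have "\<dots> = (\<Sum>j=1..N. X j - (if j = 1 then (of_bool (t \<in> {B, Bv, D}) / 2) *\<^sub>R X j else 0)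
      - (if j = N then (of_bool (t = D) / 2) *\<^sub>R X j else 0))"
    by (intro sum.cong refl) (auto simp: calN_limit_div_h_weight[OF N] scaleR_diff_left)
  also have "\<dots> = (\<Sum>j=1..N. X j) - (of_bool (t \<in> {B, Bv, D}) / 2) *\<^sub>R X 1 - (of_bool (t = D) / 2) *\<^sub>R X N"
    using N by (simp add: sum_subtractf sum.delta)
  finally show ?thesis
    unfolding X_def scaleR_sum_right .
qed

lemma KN_tendsto_integral:
  assumes \<rho>: "\<rho> > 0" and W: "W > 0"
  shows "(\<lambda>N. KN t W \<rho> N z z') \<longlonglongrightarrow> integral {0..sqrt \<rho> * W} (\<lambda>l. kernel_density t \<rho> W z z' (calN_limit t, l))"
proof -
  define a G where "a = sqrt \<rho> * W" and "G = kernel_density t \<rho> W z z'"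
  define k s where "k N = calN t N / N" and "s N j = a * Jidx t j / N" for N j :: nat
  have a: "a > 0"
    unfolding a_def using \<rho> W by simp
  have box: "compact ({1..4::real} \<times> {0..a})"
    by (intro compact_Times compact_Icc)
  have G: "continuous_on ({1..4} \<times> {0..a}) G"
    unfolding G_def by (rule continuous_on_kernel_density[OF \<rho> W box]) auto
  have k_in: "\<forall>\<^sub>F N in sequentially. k N \<in> {1..4}"
    unfolding k_def using eventually_ge_at_top[of 2] by eventually_elim (rule calN_div_in_box)
  have s: "s N j \<in> {a * (real j - 1) / N .. a * real j / N}" if "1 \<le> j" "j \<le> N" for N j
    using Jidx_bounds[OF that(1), of t] a unfolding s_def
    by (auto intro!: divide_right_mono mult_left_mono)
  have s_box: "s N j \<in> {0..a}" if "1 \<le> j" "j \<le> N" for N j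
  proof -
    have "a * real j / N \<le> a"
      using a that by (simp add: field_simps)
    then show ?thesis
      using s[OF that] a that(1) by (auto intro: order_trans[rotated])
  qed
  have boundary: "(\<lambda>N. (a / N) *\<^sub>R G (k N, s N (j N))) \<longlonglongrightarrow> 0"
    if "\<And>N. N \<ge> 2 \<Longrightarrow> 1 \<le> j N \<and> j N \<le> N" for j
    using box G
  proof (rule Riemann_summand_tendsto_zero)
    show "\<forall>\<^sub>F N in sequentially. (k N, s N (j N)) \<in> {1..4} \<times> {0..a}"
      using k_in eventually_ge_at_top[of 2] by eventually_elim (use that s_box in auto)
  qed
  define R where "R N = (a / N) *\<^sub>R (\<Sum>j=1..N. G (k N, s N j))
      - (of_bool (t \<in> {B, Bv, D}) / 2) *\<^sub>R ((a / N) *\<^sub>R G (k N, s N 1))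
      - (of_bool (t = D) / 2) *\<^sub>R ((a / N) *\<^sub>R G (k N, s N N))" for N
  have "R \<longlonglongrightarrow> integral {0..a} (\<lambda>l. G (calN_limit t, l))
      - (of_bool (t \<in> {B, Bv, D}) / 2) *\<^sub>R 0 - (of_bool (t = D) / 2) *\<^sub>R 0"
    unfolding R_def
    using Riemann_sum_tendsto_integral[OF a compact_Icc G calN_div_tendsto[of t, folded k_def] k_in s]
      boundary[of "\<lambda>_. 1"] boundary[of "\<lambda>N. N"]
    by (intro tendsto_intros) auto
  moreover have "\<forall>\<^sub>F N in sequentially. R N = KN t W \<rho> N z z'"
    using eventually_ge_at_top[of 2]
    by eventually_elim (simp add: R_def KN_eq_Riemann_sum[OF \<rho> W] a_def G_def k_def s_def)
  ultimately show ?thesis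
    unfolding a_def G_def by (auto intro: Lim_transform_eventually)
qed

section \<open>Identification of the limits\<close>

definition KA_integrand :: "real \<Rightarrow> real \<Rightarrow> complex \<Rightarrow> complex \<Rightarrow> real \<Rightarrow> complex" where
  "KA_integrand \<rho> W z z' s = (let r = complex_of_real (sqrt \<rho>); w = complex_of_real W; p = complex_of_real \<rho> in
     exp (- 2 * pi * (complex_of_real s)^2 + 2 * pi * \<i> * r * (z - cnj z') * complex_of_real s)
     * theta2 (r * w * (\<i> * complex_of_real s + r * z)) (\<i> * p * w^2)
     * theta2 (r * w * (\<i> * complex_of_real s - r * cnj z')) (\<i> * p * w^2))"

definition I1_integrand ::
    "(complex \<Rightarrow> complex \<Rightarrow> complex) \<Rightarrow> real \<Rightarrow> real \<Rightarrow> complex \<Rightarrow> complex \<Rightarrow> real \<Rightarrow> complex" where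
  "I1_integrand th \<rho> W z z' s = (let r = complex_of_real (sqrt \<rho>); w = complex_of_real W; p = complex_of_real \<rho> in
     exp (- pi * (complex_of_real s)^2 + 2 * pi * \<i> * r * (z - cnj z') * complex_of_real s)
     * th (r * w * (\<i> * complex_of_real s + 2 * r * z)) (2 * \<i> * p * w^2)
     * th (r * w * (\<i> * complex_of_real s - 2 * r * cnj z')) (2 * \<i> * p * w^2))"

definition I2_integrand ::
    "(complex \<Rightarrow> complex \<Rightarrow> complex) \<Rightarrow> real \<Rightarrow> real \<Rightarrow> complex \<Rightarrow> complex \<Rightarrow> real \<Rightarrow> complex" where
  "I2_integrand th \<rho> W z z' s = (let r = complex_of_real (sqrt \<rho>); w = complex_of_real W; p = complex_of_real \<rho> in
     exp (- pi * (complex_of_real s)^2 + 2 * pi * \<i> * r * (z + cnj z') * complex_of_real s)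
     * th (r * w * (\<i> * complex_of_real s + 2 * r * z)) (2 * \<i> * p * w^2)
     * th (r * w * (\<i> * complex_of_real s + 2 * r * cnj z')) (2 * \<i> * p * w^2))"

lemma KA_eq_integral:
  "KA W \<rho> z z' = of_real (sqrt 2 * \<rho> * exp (- pi * \<rho> * ((Im z)^2 + (Im z')^2)))
     * integral {0 .. sqrt \<rho> * W} (KA_integrand \<rho> W z z')"
  unfolding KA_def KA_integrand_def Let_def ..

lemma I1_eq_integral: "I1 \<mu> W \<rho> z z' = integral {- sqrt \<rho> * W .. sqrt \<rho> * W} (I1_integrand (theta_mu \<mu>) \<rho> W z z')"
  unfolding I1_def I1_integrand_def Let_def ..

lemma I2_eq_integral: "I2 \<mu> W \<rho> z z' = integral {- sqrt \<rho> * W .. sqrt \<rho> * W} (I2_integrand (theta_mu \<mu>) \<rho> W z z')"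
  unfolding I2_def I2_integrand_def Let_def ..

lemma continuous_on_I_integrands:
  fixes S :: "real set"
  assumes th: "th \<in> {theta1, theta2}" and \<rho>: "\<rho> > 0" and W: "W > 0" and S: "compact S"
  shows "continuous_on S (I1_integrand th \<rho> W z z')" "continuous_on S (I2_integrand th \<rho> W z z')"
proof -
  have "Im (2 * \<i> * of_real \<rho> * (of_real W)^2) > 0"
    using \<rho> W by simp
  then show "continuous_on S (I1_integrand th \<rho> W z z')" "continuous_on S (I2_integrand th \<rho> W z z')"
    unfolding I1_integrand_def[abs_def] I2_integrand_def[abs_def] Let_def
    by (intro continuous_intros continuous_on_theta[OF th S]; simp)+
qed

lemma kernel_density_A:
  assumes \<rho>: "\<rho> > 0"
  shows "kernel_density A \<rho> W z z' (1, l)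
    = of_real (sqrt 2 * \<rho> * exp (- pi * \<rho> * ((Im z)^2 + (Im z')^2))) * KA_integrand \<rho> W z z' l"
proof -
  define r w p where "r = complex_of_real (sqrt \<rho>)" and "w = complex_of_real W" and "p = complex_of_real \<rho>"
  define E where "E x = exp (2 * pi * \<i> * of_real (sqrt \<rho> * l) * x)" for x
  have rr: "r * r = p"
    unfolding r_def p_def using \<rho> by (simp flip: of_real_mult)
  have M: "M_profile theta2 0 \<rho> W (1, l) x = E x * theta2 (r * w * (\<i> * of_real l + r * x)) (\<i> * p * w^2)" for x
    unfolding M_profile_def theta_pair_def E_def r_def w_def p_def
    using rr[unfolded r_def p_def] by (simp add: algebra_simps)
  have "cnj (theta2 (r * w * (\<i> * of_real l + r * z')) (\<i> * p * w^2))
      = theta2 (r * w * (\<i> * of_real l - r * cnj z')) (\<i> * p * w^2)"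
    unfolding cnj_theta2 by (rule arg_cong2[where f = theta2]) (simp_all add: r_def w_def p_def algebra_simps)
  then have cM: "cnj (M_profile theta2 0 \<rho> W (1, l) z')
      = cnj (E z') * theta2 (r * w * (\<i> * of_real l - r * cnj z')) (\<i> * p * w^2)"
    unfolding M complex_cnj_mult[of "E z'"] by simp
  have gauss: "exp (- 2 * pi * (complex_of_real l)^2 + 2 * pi * \<i> * r * (z - cnj z') * complex_of_real l)
      = of_real (exp (- 2 * pi * l^2)) * E z * cnj (E z')"
    unfolding E_def r_def by (simp add: exp_cnj algebra_simps flip: exp_add exp_of_real)
  have "KA_integrand \<rho> W z z' l
      = of_real (exp (- 2 * pi * l^2)) * (M_profile theta2 0 \<rho> W (1, l) z * cnj (M_profile theta2 0 \<rho> W (1, l) z'))"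
    unfolding KA_integrand_def Let_def r_def[symmetric] w_def[symmetric] p_def[symmetric] gauss cM
    unfolding M by (simp add: mult_ac)
  then show ?thesis
    unfolding kernel_density_def prod.sel by (simp add: theta_of_def mirror_sign_def calN_limit_def mult_ac)
qed

lemma M_profile_mirror_product:
  fixes th :: "complex \<Rightarrow> complex \<Rightarrow> complex" and \<epsilon> \<kappa> \<sigma> :: complex
  assumes parity: "\<And>v T. th (- v) T = \<epsilon> * th v T"
    and conj: "\<And>v T. cnj (th v T) = \<kappa> * th (- cnj v) (- cnj T)"
    and \<epsilon>: "\<epsilon> \<in> {1, -1}" and \<sigma>: "\<sigma> \<in> {1, -1}" and \<rho>: "\<rho> > 0"
  shows "of_real (exp (- pi * l^2)) * (M_profile th \<sigma> \<rho> W (2, l) z * cnj (M_profile th \<sigma> \<rho> W (2, l) z'))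
    = \<kappa> * (I1_integrand th \<rho> W z z' l + I1_integrand th \<rho> W z z' (- l)
        + \<sigma> * (I2_integrand th \<rho> W z z' l + I2_integrand th \<rho> W z z' (- l)))"
proof -
  define r w p where "r = complex_of_real (sqrt \<rho>)" and "w = complex_of_real W" and "p = complex_of_real \<rho>"
  define T where "T = 2 * \<i> * p * w^2"
  define U where "U s x = r * w * (\<i> * of_real s + 2 * r * x)" for s x
  define E where "E s x = exp (2 * pi * \<i> * of_real (sqrt \<rho> * s) * x)" for s x
  \<comment> \<open>up to signs, M at z is \<Phi> l + \<Phi> (- l) and cnj M at z' is \<Psi> l + \<Psi> (- l)\<close>
  define \<Phi> \<Psi> where "\<Phi> s = E s z * th (U s z) T" and "\<Psi> s = cnj (E s z') * th (U (- s) (cnj z')) T" for s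
  have rr: "r * r = p"
    unfolding r_def p_def using \<rho> by (simp flip: of_real_mult)
  have cnj_U: "cnj (U s x) = U (- s) (cnj x)" for s x
    unfolding U_def r_def w_def by simp
  have U_mirror: "r * w * (\<i> * of_real s - 2 * r * x) = - U (- s) x" for s x
    unfolding U_def by (simp add: algebra_simps)
  have cnj_T: "- cnj T = T"
    unfolding T_def p_def w_def by simp
  have M: "M_profile th \<sigma> \<rho> W (2, l) x = E l x * th (U l x) T + \<sigma> * E (- l) x * th (- U (- l) x) T" for x
    unfolding M_profile_def theta_pair_def E_def U_def T_def r_def w_def p_def
    using rr[unfolded r_def p_def] by (simp add: algebra_simps)
  have "cnj \<sigma> = \<sigma>" "cnj \<epsilon> = \<epsilon>" "\<epsilon> * \<epsilon> = 1"
    using \<sigma> \<epsilon> by auto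
  then have cM: "cnj (M_profile th \<sigma> \<rho> W (2, l) z') = \<kappa> * (\<epsilon> * \<Psi> l + \<sigma> * \<Psi> (- l))"
    unfolding M complex_cnj_add complex_cnj_mult conj cnj_U cnj_T parity \<Psi>_def
    by (simp add: algebra_simps)
  have gauss: "exp (- pi * (complex_of_real s)^2 + 2 * pi * \<i> * r * (x + y) * complex_of_real s)
      = of_real (exp (- pi * s^2)) * E s x * E s y" for s x y
    unfolding E_def r_def by (simp add: algebra_simps flip: exp_add exp_of_real)
  have I1: "I1_integrand th \<rho> W z z' s = \<epsilon> * of_real (exp (- pi * s^2)) * \<Phi> s * \<Psi> s" for s
    using gauss[of s z "- cnj z'"]
    unfolding I1_integrand_def Let_def r_def[symmetric] w_def[symmetric] p_def[symmetric] T_def[symmetric]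
      U_def[symmetric] U_mirror parity \<Phi>_def \<Psi>_def E_def
    by (simp add: exp_cnj mult_ac)
  have I2: "I2_integrand th \<rho> W z z' s = of_real (exp (- pi * s^2)) * \<Phi> s * \<Psi> (- s)" for s
    using gauss[of s z "cnj z'"]
    unfolding I2_integrand_def Let_def r_def[symmetric] w_def[symmetric] p_def[symmetric] T_def[symmetric]
      U_def[symmetric] \<Phi>_def \<Psi>_def E_def
    by (simp add: exp_cnj mult_ac)
  have Mz: "M_profile th \<sigma> \<rho> W (2, l) z = \<Phi> l + \<sigma> * \<epsilon> * \<Phi> (- l)"
    unfolding M \<Phi>_def parity by (simp add: mult_ac)
  show ?thesis
    unfolding Mz cM I1 I2 using \<epsilon> \<sigma> by (auto simp: algebra_simps)
qed

lemma integral_kernel_density_mirror: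
  assumes t: "t \<noteq> A" and \<rho>: "\<rho> > 0" and W: "W > 0"
    and parity: "\<And>v T. theta_of t (- v) T = \<epsilon> * theta_of t v T"
    and conj: "\<And>v T. cnj (theta_of t v T) = \<epsilon> * theta_of t (- cnj v) (- cnj T)"
    and \<epsilon>: "\<epsilon> \<in> {1, -1}"
  defines "a \<equiv> sqrt \<rho> * W"
  shows "integral {0..a} (\<lambda>l. kernel_density t \<rho> W z z' (2, l))
    = of_real (\<rho> * exp (- 2 * pi * \<rho> * ((Im z)^2 + (Im z')^2))) * \<epsilon>
      * (integral {-a..a} (I1_integrand (theta_of t) \<rho> W z z')
         + mirror_sign t * integral {-a..a} (I2_integrand (theta_of t) \<rho> W z z'))"
proof -
  define c where "c = complex_of_real (\<rho> * exp (- 2 * pi * \<rho> * ((Im z)^2 + (Im z')^2)))"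
  define H where "H s = I1_integrand (theta_of t) \<rho> W z z' s + mirror_sign t * I2_integrand (theta_of t) \<rho> W z z' s"
    for s
  have th: "theta_of t \<in> {theta1, theta2}"
    by (simp add: theta_of_def)
  have H: "continuous_on {-a..a} H"
    unfolding H_def using continuous_on_I_integrands[OF th \<rho> W compact_Icc] by (intro continuous_intros)
  have "mirror_sign t \<in> {1, -1}"
    using t by (simp add: mirror_sign_def)
  note mirror = M_profile_mirror_product[where th = "theta_of t" and \<kappa> = \<epsilon> and \<sigma> = "mirror_sign t",
      OF parity conj \<epsilon> this \<rho>]
  have "kernel_density t \<rho> W z z' (2, l) = c * (\<epsilon> * (H l + H (- l)))" for l
  proof -
    have "sqrt (2 * 2) = (2::real)"
      by (simp add: real_sqrt_mult)
    then have "kernel_density t \<rho> W z z' (2, l) = c * (of_real (exp (- pi * l^2))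
        * (M_profile (theta_of t) (mirror_sign t) \<rho> W (2, l) z
           * cnj (M_profile (theta_of t) (mirror_sign t) \<rho> W (2, l) z')))"
      unfolding kernel_density_def prod.sel c_def using t by (simp add: calN_limit_def mult_ac)
    then show ?thesis
      unfolding mirror H_def by (simp add: algebra_simps)
  qed
  then have "integral {0..a} (\<lambda>l. kernel_density t \<rho> W z z' (2, l)) = c * \<epsilon> * integral {-a..a} H"
    using integral_fold_symmetric[OF H] \<rho> W unfolding a_def by (simp add: mult.assoc)
  also have "integral {-a..a} H = integral {-a..a} (I1_integrand (theta_of t) \<rho> W z z')
      + mirror_sign t * integral {-a..a} (I2_integrand (theta_of t) \<rho> W z z')"
    unfolding H_def using continuous_on_I_integrands[OF th \<rho> W compact_Icc]
    by (simp add: integral_add integral_mult integrable_on_mult_right integrable_continuous_real)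
  finally show ?thesis
    unfolding c_def .
qed

lemma KN_tendsto_KA:
  assumes "\<rho> > 0" "W > 0"
  shows "(\<lambda>N. KN A W \<rho> N z z') \<longlonglongrightarrow> KA W \<rho> z z'"
  using KN_tendsto_integral[OF assms, of A]
  by (simp add: KA_eq_integral kernel_density_A[OF assms(1)] calN_limit_def)

lemma KN_tendsto_KB:
  assumes "\<rho> > 0" "W > 0" "t \<in> {B, Bv}"
  shows "(\<lambda>N. KN t W \<rho> N z z') \<longlonglongrightarrow> KB W \<rho> z z'"
proof -
  have "theta_of t = theta1" "mirror_sign t = -1" "calN_limit t = 2"
    using assms(3) by (auto simp: theta_of_def mirror_sign_def calN_limit_def)
  with integral_kernel_density_mirror[OF _ assms(1,2), of t "-1"] assms(3)
  have "integral {0..sqrt \<rho> * W} (\<lambda>l. kernel_density t \<rho> W z z' (calN_limit t, l)) = KB W \<rho> z z'"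
    by (auto simp: theta1_minus cnj_theta1 KB_def I1_eq_integral I2_eq_integral theta_mu_def algebra_simps)
  then show ?thesis
    using KN_tendsto_integral[OF assms(1,2)] by metis
qed

lemma KN_tendsto_KC:
  assumes "\<rho> > 0" "W > 0" "t \<in> {C, Cv, BC}"
  shows "(\<lambda>N. KN t W \<rho> N z z') \<longlonglongrightarrow> KC W \<rho> z z'"
proof -
  have "theta_of t = theta2" "mirror_sign t = -1" "calN_limit t = 2"
    using assms(3) by (auto simp: theta_of_def mirror_sign_def calN_limit_def)
  with integral_kernel_density_mirror[OF _ assms(1,2), of t 1] assms(3)
  have "integral {0..sqrt \<rho> * W} (\<lambda>l. kernel_density t \<rho> W z z' (calN_limit t, l)) = KC W \<rho> z z'"
    by (auto simp: theta2_minus cnj_theta2 KC_def I1_eq_integral I2_eq_integral theta_mu_def algebra_simps)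
  then show ?thesis
    using KN_tendsto_integral[OF assms(1,2)] by metis
qed

lemma KN_tendsto_KD:
  assumes "\<rho> > 0" "W > 0"
  shows "(\<lambda>N. KN D W \<rho> N z z') \<longlonglongrightarrow> KD W \<rho> z z'"
proof -
  have "theta_of D = theta2" "mirror_sign D = 1" "calN_limit D = 2"
    by (auto simp: theta_of_def mirror_sign_def calN_limit_def)
  with integral_kernel_density_mirror[OF _ assms(1,2), of D 1]
  have "integral {0..sqrt \<rho> * W} (\<lambda>l. kernel_density D \<rho> W z z' (calN_limit D, l)) = KD W \<rho> z z'"
    by (auto simp: theta2_minus cnj_theta2 KD_def I1_eq_integral I2_eq_integral theta_mu_def algebra_simps)
  then show ?thesis
    using KN_tendsto_integral[OF assms(1,2)] by metis
qed

theorem proposition3p3: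
  fixes \<rho> W :: real
  assumes "\<rho> > 0" and "W > 0"
  shows "(\<forall>z z'. (\<lambda>N. KN A W \<rho> N z z') \<longlonglongrightarrow> KA W \<rho> z z')
       \<and> (\<forall>t \<in> {B, Bv}. \<forall>z z'. (\<lambda>N. KN t W \<rho> N z z') \<longlonglongrightarrow> KB W \<rho> z z')
       \<and> (\<forall>t \<in> {C, Cv, BC}. \<forall>z z'. (\<lambda>N. KN t W \<rho> N z z') \<longlonglongrightarrow> KC W \<rho> z z')
       \<and> (\<forall>z z'. (\<lambda>N. KN D W \<rho> N z z') \<longlonglongrightarrow> KD W \<rho> z z')"
  using KN_tendsto_KA[OF assms] KN_tendsto_KB[OF assms] KN_tendsto_KC[OF assms] KN_tendsto_KD[OF assms]
  by blast

end
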